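(* Let $n\ge 3$ and $\ell>0$, and let $S=(n-2)I_n+\mathbf{1}_n\mathbf{1}_n^\top$. For every real symmetric diagonally dominant $n\times n$ matrix $J$ with $J_{ij}\ge \ell$ for all $i,j$, $J$ is invertible and $$\|J^{-1}\|_\infty\le \frac{1}{\ell}\|S^{-1}\|_\infty=\frac{3n-4}{2\ell(n-2)(n-1)}.$$ Moreover, equality holds if and only if $J=\ell S$.
   Context: $I_n$ is the $n\times n$ identity matrix and $\mathbf{1}_n$ the all-ones column vector in $\mathbb{R}^n$. For a real $n\times n$ matrix $J$, $\Delta_i(J)=|J_{ii}|-\sum_{j\ne i}|J_{ij}|$; $J$ is diagonally dominant if $\Delta_i(J)\ge 0$ for all $i$. $\|A\|_\infty$ denotes the maximum absolute row sum of $A$ (the operator norm induced by the $\ell^\infty$ vector norm). *)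

theory Defs
  imports "HOL-Analysis.Analysis"
begin

text \<open>Maximum absolute row sum of a square real matrix (operator norm induced by the l-infinity norm).\<close>
definition inf_norm :: "real^'n^'n \<Rightarrow> real" where
  "inf_norm A = Max (range (\<lambda>i. \<Sum>j\<in>UNIV. \<bar>A $ i $ j\<bar>))"

definition row_excess :: "real^'n^'n \<Rightarrow> 'n \<Rightarrow> real" where
  "row_excess J i = \<bar>J $ i $ i\<bar> - (\<Sum>j\<in>UNIV - {i}. \<bar>J $ i $ j\<bar>)"

definition diag_dominant :: "real^'n^'n \<Rightarrow> bool" where
  "diag_dominant J \<longleftrightarrow> (\<forall>i. row_excess J i \<ge> 0)"

definition S_mat :: "real^'n^'n" where
  "S_mat = (real CARD('n) - 2) *\<^sub>R mat 1 + (\<chi> i j. 1)"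

end

theory Submission
  imports Defs
begin

text \<open>
  After scaling by 1/l we may assume l = 1. Then D = J - S is symmetric, entrywise nonnegative
  and diagonally dominant, and expanding sum_i w_i (D x)_i over pairs shows that it is nonnegative
  whenever w_i x_i >= 0 and (w_i + w_j) (x_i + x_j) >= 0 for all i, j.

  The core is the estimate |(S + D) x|_inf >= c |x|_inf with c = 2(n-2)(n-1)/(3n-4), where,
  replacing x by -x, we may assume sum x >= 0. Let M = |x|_inf. If M is attained at a positive
  coordinate, that row of (S + D) x is at least (n-2) M > c M. Otherwise x_k = -M, and row k gives
  the bound as long as sum x <= (n-2-c) M. If sum x is larger, sum the rows of (S + D) x, signed
  like x, over the coordinates with |x_i| >= tau = (c M - sum x)/(n-2): by the pair criterion the
  D-part is nonnegative, and a counting inequality bounds the S-part below by c M per row.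
  Tracing the equality cases forces D = 0.

  Applying the estimate to J^-1 b, for b the sign vector of a maximal row of J^-1, gives
  |J^-1|_inf <= 1/(l c); and S^-1 = ((2n-2) I - 1 1^T)/(2(n-2)(n-1)) has norm exactly 1/c.
\<close>

section \<open>Infinity norms of vectors and matrices\<close>

lemma infnorm_cart_Max: "infnorm (x::real^'n) = Max (range (\<lambda>i. \<bar>x$i\<bar>))"
  unfolding infnorm_cart by (simp add: cSup_eq_Max full_SetCompr_eq)

lemma infnorm_cart_attained: "\<exists>i. \<bar>x$i\<bar> = infnorm (x::real^'n)"
proof -
  have "Max (range (\<lambda>i. \<bar>x$i\<bar>)) \<in> range (\<lambda>i. \<bar>x$i\<bar>)" by (rule Max_in) auto
  then show ?thesis unfolding infnorm_cart_Max by (metis (no_types, lifting) rangeE)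
qed

lemma infnorm_cart_le: "(\<And>i. \<bar>x$i\<bar> \<le> B) \<Longrightarrow> infnorm (x::real^'n) \<le> B"
  using infnorm_cart_attained[of x] by metis

lemma row_abs_sum_le_inf_norm: "(\<Sum>j\<in>UNIV. \<bar>A$i$j\<bar>) \<le> inf_norm A"
  unfolding inf_norm_def by (rule Max_ge) auto

lemma inf_norm_attained: "\<exists>i. inf_norm A = (\<Sum>j\<in>UNIV. \<bar>A$i$j\<bar>)"
proof -
  have "inf_norm A \<in> range (\<lambda>i. \<Sum>j\<in>UNIV. \<bar>A$i$j\<bar>)"
    unfolding inf_norm_def by (rule Max_in) auto
  then show ?thesis by (metis (no_types, lifting) rangeE)
qed

lemma inf_norm_eqI: "(\<And>i. (\<Sum>j\<in>UNIV. \<bar>A$i$j\<bar>) = r) \<Longrightarrow> inf_norm A = r"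
  unfolding inf_norm_def by (simp add: image_constant_conv)

lemma inf_norm_scaleR: "inf_norm (a *\<^sub>R A) = \<bar>a\<bar> * inf_norm A"
proof -
  have "inf_norm (a *\<^sub>R A) = Max ((*) \<bar>a\<bar> ` range (\<lambda>i. \<Sum>j\<in>UNIV. \<bar>A$i$j\<bar>))"
    unfolding inf_norm_def by (simp add: abs_mult sum_distrib_left image_image)
  also have "\<dots> = \<bar>a\<bar> * inf_norm A"
    unfolding inf_norm_def by (rule mono_Max_commute[symmetric]) (auto simp: mono_def mult_left_mono)
  finally show ?thesis .
qed

lemma inf_norm_attained_infnorm: "\<exists>b. infnorm b \<le> 1 \<and> infnorm (A *v b) = inf_norm A"
proof -
  obtain i where i: "inf_norm A = (\<Sum>j\<in>UNIV. \<bar>A$i$j\<bar>)"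
    using inf_norm_attained by blast
  define b where "b = (\<chi> j. sgn (A$i$j))"
  have b1: "infnorm b \<le> 1"
    by (rule infnorm_cart_le) (simp add: b_def sgn_if)
  have "(A *v b)$i = inf_norm A"
    unfolding i b_def matrix_vector_mult_def by (simp add: abs_sgn)
  then have "inf_norm A \<le> infnorm (A *v b)"
    using component_le_infnorm_cart[of "A *v b" i] by simp
  moreover have "infnorm (A *v b) \<le> inf_norm A"
  proof (rule infnorm_cart_le)
    fix k
    have "\<bar>(A *v b)$k\<bar> \<le> (\<Sum>j\<in>UNIV. \<bar>A$k$j * b$j\<bar>)"
      unfolding matrix_vector_mult_def by (simp add: sum_abs)
    also have "\<dots> \<le> (\<Sum>j\<in>UNIV. \<bar>A$k$j\<bar>)"
      by (rule sum_mono) (simp add: b_def abs_mult sgn_if)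
    also have "\<dots> \<le> inf_norm A" by (rule row_abs_sum_le_inf_norm)
    finally show "\<bar>(A *v b)$k\<bar> \<le> inf_norm A" .
  qed
  ultimately show ?thesis using b1 by auto
qed

section \<open>The matrix S and its inverse\<close>

lemma S_mat_entry: "(S_mat::real^'n^'n)$i$j = (if i = j then real CARD('n) - 1 else 1)"
  unfolding S_mat_def by (simp add: mat_def)

lemma S_mat_mult_vec:
  "((S_mat::real^'n^'n) *v x)$i = (real CARD('n) - 2) * x$i + (\<Sum>j\<in>UNIV. x$j)"
proof -
  have "((S_mat::real^'n^'n) *v x)$i
      = (\<Sum>j\<in>UNIV. (if j = i then (real CARD('n) - 2) * x$j else 0) + x$j)"
    unfolding matrix_vector_mult_def S_mat_entry by (auto intro!: sum.cong simp: algebra_simps)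
  then show ?thesis by (simp add: sum.distrib)
qed

lemma matrix_inv_eqI:
  fixes A B :: "'a::field^'n^'n"
  assumes "A ** B = mat 1"
  shows "matrix_inv A = B"
proof -
  have "\<exists>A'. A ** A' = mat 1 \<and> A' ** A = mat 1"
    using assms matrix_left_right_inverse by blast
  then have "matrix_inv A ** A = mat 1"
    unfolding matrix_inv_def by (rule someI2_ex) blast
  then show ?thesis
    by (metis assms matrix_mul_assoc matrix_mul_lid matrix_mul_rid)
qed

lemma S_mat_right_inverse:
  assumes "CARD('n) \<ge> 3"
  shows "(S_mat::real^'n^'n) ** (\<chi> i j.
    (if i = j then 2 * real CARD('n) - 3 else -1) / (2 * (real CARD('n) - 2) * (real CARD('n) - 1)))
    = mat 1"
    (is "_ ** ?B = _")
proof -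
  define n where "n = real CARD('n)"
  have d: "2 * (n - 2) * (n - 1) > 0" using assms by (simp add: n_def)
  have col_sum: "(\<Sum>k\<in>UNIV. ?B$k$j) = (n - 2) / (2 * (n - 2) * (n - 1))" for j
  proof -
    have "(\<Sum>k\<in>UNIV. ?B$k$j)
        = (\<Sum>k\<in>UNIV. (if k = j then 2 * n - 2 else 0) - 1) / (2 * (n - 2) * (n - 1))"
      unfolding sum_divide_distrib n_def by (auto intro!: sum.cong)
    then show ?thesis by (simp add: sum_subtractf n_def)
  qed
  have "(S_mat ** ?B)$i$j = (mat 1 :: real^'n^'n)$i$j" for i j
  proof -
    have "(S_mat ** ?B)$i$j = (S_mat *v (\<chi> k. ?B$k$j))$i"
      by (simp add: matrix_matrix_mult_def matrix_vector_mult_def)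
    also have "\<dots> = (n - 2) * ?B$i$j + (\<Sum>k\<in>UNIV. ?B$k$j)"
      unfolding S_mat_mult_vec n_def by simp
    also have "\<dots> = (n - 2) * ((if i = j then 2 * n - 3 else -1) + 1) / (2 * (n - 2) * (n - 1))"
      unfolding col_sum by (simp add: n_def flip: add_divide_distrib) (simp add: algebra_simps)
    finally show ?thesis
      using d by (cases "i = j") (auto simp: mat_def algebra_simps)
  qed
  then show "S_mat ** ?B = mat 1" by (simp add: vec_eq_iff)
qed

lemma matrix_inv_S_mat:
  assumes "CARD('n) \<ge> 3"
  shows "matrix_inv (S_mat::real^'n^'n) = (\<chi> i j.
    (if i = j then 2 * real CARD('n) - 3 else -1) / (2 * (real CARD('n) - 2) * (real CARD('n) - 1)))"
  using S_mat_right_inverse[OF assms] by (rule matrix_inv_eqI)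

lemma S_mat_mult_matrix_inv: "CARD('n) \<ge> 3 \<Longrightarrow> (S_mat::real^'n^'n) ** matrix_inv S_mat = mat 1"
  unfolding matrix_inv_S_mat by (rule S_mat_right_inverse)

lemma inf_norm_matrix_inv_S_mat:
  assumes "CARD('n) \<ge> 3"
  shows "inf_norm (matrix_inv (S_mat::real^'n^'n))
    = (3 * real CARD('n) - 4) / (2 * (real CARD('n) - 2) * (real CARD('n) - 1))"
proof (rule inf_norm_eqI)
  fix i :: 'n
  define n where "n = real CARD('n)"
  have d: "2 * (n - 2) * (n - 1) > 0" using assms by (simp add: n_def)
  have "(\<Sum>j\<in>UNIV. \<bar>matrix_inv (S_mat::real^'n^'n)$i$j\<bar>)
      = (\<Sum>j\<in>UNIV. (if j = i then 2 * n - 4 else 0) + 1) / (2 * (n - 2) * (n - 1))"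
    unfolding matrix_inv_S_mat[OF assms] sum_divide_distrib n_def[symmetric]
    using assms d by (auto intro!: sum.cong simp: n_def)
  also have "\<dots> = (3 * n - 4) / (2 * (n - 2) * (n - 1))"
    by (simp add: sum.distrib n_def)
  finally show "(\<Sum>j\<in>UNIV. \<bar>matrix_inv (S_mat::real^'n^'n)$i$j\<bar>)
      = (3 * real CARD('n) - 4) / (2 * (real CARD('n) - 2) * (real CARD('n) - 1))"
    by (simp add: n_def)
qed

section \<open>Symmetric nonnegative diagonally dominant matrices\<close>

lemma transpose_eq_self_iff: "transpose A = A \<longleftrightarrow> (\<forall>i j. A$j$i = A$i$j)"
  by (auto simp: transpose_def vec_eq_iff)

definition sym_nonneg_dd :: "real^'n^'n \<Rightarrow> bool" where
  "sym_nonneg_dd D \<longleftrightarrow> transpose D = D \<and> diag_dominant D \<and> (\<forall>i j. 0 \<le> D$i$j)"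

lemma row_excess_nonneg_entries:
  "(\<And>j. 0 \<le> D$i$j) \<Longrightarrow> row_excess D i = D$i$i - (\<Sum>j\<in>UNIV-{i}. D$i$j)"
  unfolding row_excess_def by simp

lemma sum_off_diagonal:
  fixes g :: "'n::finite \<Rightarrow> 'n \<Rightarrow> real"
  shows "(\<Sum>i\<in>UNIV. \<Sum>j\<in>UNIV-{i}. g i j) = (\<Sum>i\<in>UNIV. \<Sum>j\<in>UNIV. g i j) - (\<Sum>i\<in>UNIV. g i i)"
  by (simp add: sum_diff1 sum_subtractf)

lemma weighted_sum_mult_vec_symmetric:
  fixes D :: "real^'n^'n"
  assumes "transpose D = D"
  shows "2 * (\<Sum>i\<in>UNIV. w$i * (D *v x)$i)
    = 2 * (\<Sum>i\<in>UNIV. w$i * x$i * (D$i$i - (\<Sum>j\<in>UNIV-{i}. D$i$j)))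
      + (\<Sum>i\<in>UNIV. \<Sum>j\<in>UNIV-{i}. D$i$j * ((w$i + w$j) * (x$i + x$j)))"
proof -
  have sym: "D$j$i = D$i$j" for i j
    using assms by (simp add: transpose_eq_self_iff)
  have swap: "(\<Sum>i\<in>UNIV. \<Sum>j\<in>UNIV. D$i$j * g i j) = (\<Sum>i\<in>UNIV. \<Sum>j\<in>UNIV. D$i$j * g j i)"
    for g :: "'n \<Rightarrow> 'n \<Rightarrow> real"
    by (subst sum.swap) (simp add: sym)
  have "(\<Sum>i\<in>UNIV. \<Sum>j\<in>UNIV. D$i$j * ((w$i + w$j) * (x$i + x$j)))
      = (\<Sum>i\<in>UNIV. \<Sum>j\<in>UNIV. D$i$j * (w$i * x$i + w$i * x$j))
        + (\<Sum>i\<in>UNIV. \<Sum>j\<in>UNIV. D$i$j * (w$j * x$j + w$j * x$i))"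
    by (simp add: sum.distrib[symmetric] algebra_simps)
  also have "\<dots> = 2 * (\<Sum>i\<in>UNIV. \<Sum>j\<in>UNIV. D$i$j * (w$i * x$i + w$i * x$j))"
    using swap[of "\<lambda>i j. w$i * x$i + w$i * x$j"] by simp
  also have "\<dots> = 2 * (\<Sum>i\<in>UNIV. w$i * x$i * (\<Sum>j\<in>UNIV. D$i$j)) + 2 * (\<Sum>i\<in>UNIV. w$i * (D *v x)$i)"
    by (simp add: matrix_vector_mult_def sum.distrib sum_distrib_left algebra_simps)
  moreover have "(\<Sum>i\<in>UNIV. w$i * (x$i * (4 * D$i$i))) = 2 * (\<Sum>i\<in>UNIV. w$i * (x$i * (2 * D$i$i)))"
    by (simp add: sum_distrib_left algebra_simps)
  ultimately show ?thesis
    unfolding sum_off_diagonal by (simp add: sum_diff1 sum_subtractf sum.distrib algebra_simps)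
qed

lemma sym_nonneg_ddD:
  assumes "sym_nonneg_dd D"
  shows "transpose D = D" "0 \<le> D$i$j" "row_excess D i = D$i$i - (\<Sum>j\<in>UNIV-{i}. D$i$j)"
    "0 \<le> row_excess D i"
  using assms unfolding sym_nonneg_dd_def diag_dominant_def by (auto simp: row_excess_nonneg_entries)

context
  fixes D :: "real^'n^'n" and w x :: "real^'n"
  assumes D: "sym_nonneg_dd D"
    and diag: "\<And>i. 0 \<le> w$i * x$i"
    and pair: "\<And>i j. i \<noteq> j \<Longrightarrow> 0 \<le> (w$i + w$j) * (x$i + x$j)"
begin

private lemma pair_term_nonneg: "j \<in> UNIV - {i} \<Longrightarrow> 0 \<le> D$i$j * ((w$i + w$j) * (x$i + x$j))"
  using sym_nonneg_ddD(2)[OF D] pair by simp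

private lemma terms_nonneg:
  "0 \<le> w$i * x$i * row_excess D i"
  "0 \<le> (\<Sum>j\<in>UNIV-{i}. D$i$j * ((w$i + w$j) * (x$i + x$j)))"
proof -
  show "0 \<le> w$i * x$i * row_excess D i" using diag sym_nonneg_ddD(4)[OF D] by simp
  show "0 \<le> (\<Sum>j\<in>UNIV-{i}. D$i$j * ((w$i + w$j) * (x$i + x$j)))"
    by (rule sum_nonneg) (rule pair_term_nonneg)
qed

private lemma decomposition:
  "2 * (\<Sum>i\<in>UNIV. w$i * (D *v x)$i)
    = 2 * (\<Sum>i\<in>UNIV. w$i * x$i * row_excess D i)
      + (\<Sum>i\<in>UNIV. \<Sum>j\<in>UNIV-{i}. D$i$j * ((w$i + w$j) * (x$i + x$j)))"
  using weighted_sum_mult_vec_symmetric[OF sym_nonneg_ddD(1)[OF D]] sym_nonneg_ddD(3)[OF D] by simp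

lemma weighted_sum_mult_vec_nonneg: "0 \<le> (\<Sum>i\<in>UNIV. w$i * (D *v x)$i)"
  using decomposition terms_nonneg by (smt (verit) sum_nonneg)

lemma weighted_sum_mult_vec_eq_0D:
  assumes "(\<Sum>i\<in>UNIV. w$i * (D *v x)$i) = 0"
  shows "w$i * x$i * row_excess D i = 0"
    and "i \<noteq> j \<Longrightarrow> D$i$j * ((w$i + w$j) * (x$i + x$j)) = 0"
proof -
  have "(\<Sum>i\<in>UNIV. w$i * x$i * row_excess D i) = 0"
    and off: "(\<Sum>i\<in>UNIV. \<Sum>j\<in>UNIV-{i}. D$i$j * ((w$i + w$j) * (x$i + x$j))) = 0"
    using decomposition assms terms_nonneg by (smt (verit) sum_nonneg)+
  then show "w$i * x$i * row_excess D i = 0"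
    using terms_nonneg by (simp add: sum_nonneg_eq_0_iff)
  assume "i \<noteq> j"
  have "(\<Sum>k\<in>UNIV-{i}. D$i$k * ((w$i + w$k) * (x$i + x$k))) = 0"
    using off terms_nonneg by (simp add: sum_nonneg_eq_0_iff)
  then have "\<forall>k\<in>UNIV-{i}. D$i$k * ((w$i + w$k) * (x$i + x$k)) = 0"
    by (subst (asm) sum_nonneg_eq_0_iff) (auto intro: pair_term_nonneg)
  then show "D$i$j * ((w$i + w$j) * (x$i + x$j)) = 0"
    using \<open>i \<noteq> j\<close> by simp
qed

end

lemma sym_nonneg_dd_minus_S_mat:
  fixes J :: "real^'n^'n"
  assumes sym: "transpose J = J" and dd: "diag_dominant J" and ge: "\<And>i j. 1 \<le> J$i$j"
  shows "sym_nonneg_dd (J - S_mat)"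
proof -
  define n where "n = real CARD('n)"
  have off_sum: "(\<Sum>j\<in>UNIV-{i}. (J - S_mat)$i$j) = (\<Sum>j\<in>UNIV-{i}. J$i$j) - (n - 1)" for i
  proof -
    have "(\<Sum>j\<in>UNIV-{i}. (J - S_mat)$i$j) = (\<Sum>j\<in>UNIV-{i}. J$i$j - 1)"
      by (rule sum.cong) (auto simp: S_mat_entry)
    then show ?thesis by (simp add: sum_subtractf n_def of_nat_diff)
  qed
  have excess: "0 \<le> J$i$i - (\<Sum>j\<in>UNIV-{i}. J$i$j)" for i
  proof -
    have "row_excess J i = J$i$i - (\<Sum>j\<in>UNIV-{i}. J$i$j)"
      by (rule row_excess_nonneg_entries) (rule order_trans[OF zero_le_one ge])
    then show ?thesis using dd by (metis diag_dominant_def)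
  qed
  have lower: "n - 1 \<le> (\<Sum>j\<in>UNIV-{i}. J$i$j)" for i
    using sum_mono[of "UNIV - {i}" "\<lambda>_. 1" "\<lambda>j. J$i$j"] ge by (simp add: n_def of_nat_diff)
  have nonneg: "0 \<le> (J - S_mat)$i$j" for i j
    using lower[of i] excess[of i] ge[of i j] by (cases "i = j") (simp_all add: S_mat_entry n_def)
  have "row_excess (J - S_mat) i = J$i$i - (\<Sum>j\<in>UNIV-{i}. J$i$j)" for i
  proof -
    have "row_excess (J - S_mat) i = (J - S_mat)$i$i - (\<Sum>j\<in>UNIV-{i}. (J - S_mat)$i$j)"
      by (rule row_excess_nonneg_entries) (rule nonneg)
    then show ?thesis unfolding off_sum by (simp add: S_mat_entry n_def)
  qed
  then have "diag_dominant (J - S_mat)"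
    using excess by (simp add: diag_dominant_def)
  moreover have "transpose (J - S_mat) = J - S_mat"
    using sym by (simp add: transpose_eq_self_iff S_mat_entry)
  ultimately show ?thesis using nonneg by (simp add: sym_nonneg_dd_def)
qed

lemma axis_sgn_extreme_weights:
  fixes x :: "real^'n"
  assumes "\<bar>x$k\<bar> = infnorm x"
  defines "w \<equiv> axis k (sgn (x$k))"
  shows "0 \<le> w$i * x$i" "0 \<le> (w$i + w$j) * (x$i + x$j)"
proof -
  have pair: "0 \<le> sgn (x$k) * (x$k + x$j) \<and> 0 \<le> sgn (x$k) * (x$j + x$k)" for j
  proof -
    have "\<bar>x$j\<bar> \<le> \<bar>x$k\<bar>" using assms(1) by (simp add: component_le_infnorm_cart)
    then show ?thesis by (auto simp: sgn_if abs_if split: if_splits)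
  qed
  show "0 \<le> w$i * x$i" by (simp add: w_def axis_def sgn_if)
  show "0 \<le> (w$i + w$j) * (x$i + x$j)"
    using pair[of i] pair[of j] pair[of k]
    by (cases "i = k"; cases "j = k") (simp_all add: w_def axis_def)
qed

lemma sum_axis_mult: "(\<Sum>i\<in>UNIV. axis k a $ i * y$i) = a * (y$k :: real)"
proof -
  have "axis k a $ i * y$i = (if i = k then a * y$i else 0)" for i by (simp add: axis_def)
  then show ?thesis by simp
qed

lemma sym_nonneg_dd_extreme_row:
  assumes "sym_nonneg_dd D" "\<bar>x$k\<bar> = infnorm x"
  shows "0 \<le> sgn (x$k) * (D *v x)$k"
  using weighted_sum_mult_vec_nonneg[OF assms(1) axis_sgn_extreme_weights[OF assms(2)]]
  by (simp add: sum_axis_mult)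

lemma sym_nonneg_dd_extreme_row_eq_0:
  assumes "sym_nonneg_dd D" "\<bar>x$k\<bar> = infnorm x"
    and "(D *v x)$k = 0" "j \<noteq> k" "x$j \<noteq> - x$k"
  shows "D$k$j = 0"
proof -
  define w where "w = axis k (sgn (x$k))"
  have "(\<Sum>i\<in>UNIV. w$i * (D *v x)$i) = 0"
    using assms(3) by (simp add: w_def sum_axis_mult)
  then have "D$k$j * ((w$k + w$j) * (x$k + x$j)) = 0"
    using weighted_sum_mult_vec_eq_0D(2)[OF assms(1) axis_sgn_extreme_weights[OF assms(2)], of k j]
      assms(4) unfolding w_def by simp
  moreover have "x$k \<noteq> 0"
  proof
    assume "x$k = 0"
    then have "\<bar>x$j\<bar> \<le> 0" using assms(2) component_le_infnorm_cart[of x j] by simp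
    then show False using assms(5) \<open>x$k = 0\<close> by simp
  qed
  ultimately show ?thesis
    using assms(4,5) by (simp add: w_def axis_def sgn_eq_0_iff)
qed

lemma sym_nonneg_dd_eq_0:
  fixes D :: "real^'n^'n"
  assumes D: "sym_nonneg_dd D" and x0: "x \<noteq> 0" and xk: "x$k = - infnorm x"
    and others: "\<And>i. i \<noteq> k \<Longrightarrow> 0 < x$i \<and> x$i < infnorm x"
    and row: "(D *v x)$k = 0" and sum: "(\<Sum>i\<in>UNIV. (if i = k then -1 else 1) * (D *v x)$i) = 0"
  shows "D = 0"
proof -
  define w :: "real^'n" where "w = (\<chi> i. if i = k then -1 else 1)"
  have M: "0 < infnorm x" using x0 by (simp add: infnorm_pos_lt)
  have row_k: "D$k$j = 0" if "j \<noteq> k" for j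
    using sym_nonneg_dd_extreme_row_eq_0[OF D _ row that] xk M others[OF that] by simp
  have wx: "0 < w$i * x$i" for i
    using xk M others[of i] by (auto simp: w_def)
  have pair: "0 \<le> (w$i + w$j) * (x$i + x$j)" for i j
    using others[of i] others[of j] xk M by (auto simp: w_def)
  have sum_w: "(\<Sum>i\<in>UNIV. w$i * (D *v x)$i) = 0" using sum by (simp add: w_def)
  note zero = weighted_sum_mult_vec_eq_0D[OF D less_imp_le[OF wx] pair sum_w]
  have off: "D$i$j = 0" if "i \<noteq> j" for i j
  proof (cases "i = k \<or> j = k")
    case True
    moreover have "D$i$j = D$j$i"
      using sym_nonneg_ddD(1)[OF D] by (simp add: transpose_eq_self_iff)
    ultimately show ?thesis using row_k that by auto
  next
    case False
    then have "0 < (w$i + w$j) * (x$i + x$j)"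
      using others[of i] others[of j] by (simp add: w_def)
    then show ?thesis using zero(2)[OF that] by (metis mult_eq_0_iff less_irrefl)
  qed
  have "row_excess D i = 0" for i
    using zero(1)[of i] wx[of i] by (metis mult_eq_0_iff less_irrefl)
  then have "D$i$i = 0" for i
    using sym_nonneg_ddD(3)[OF D, of i] off by simp
  then show "D = 0"
    using off by (simp add: vec_eq_iff) metis
qed

section \<open>The threshold estimate\<close>

text \<open>The reciprocal of the infinity norm of S^-1; the main estimate is |J x|_inf >= l * S_gain n * |x|_inf.\<close>

definition S_gain :: "nat \<Rightarrow> real" where
  "S_gain n = 2 * (real n - 2) * (real n - 1) / (3 * real n - 4)"

lemma S_gain_bounds:
  assumes "3 \<le> n"
  shows "S_gain n * (3 * real n - 4) = 2 * (real n - 2) * (real n - 1)"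
    and "2 * (real n - 2) < 3 * S_gain n"
    and "S_gain n < real n - 2"
proof -
  have pos: "3 * real n - 4 > 0" using assms by simp
  show eq: "S_gain n * (3 * real n - 4) = 2 * (real n - 2) * (real n - 1)"
    unfolding S_gain_def using pos by simp
  show "2 * (real n - 2) < 3 * S_gain n"
    unfolding S_gain_def using pos assms by (simp add: field_simps)
  have "0 < (real n - 2) * (real n - 2)" using assms by simp
  then show "S_gain n < real n - 2"
    unfolding S_gain_def using pos by (simp add: field_simps algebra_simps)
qed

text \<open>The counting inequality behind the threshold estimate, read with t = card T, q the number of
  negative coordinates in T, SO the sum of x outside T and SN the total modulus of the negative
  coordinates in T.\<close>

lemma threshold_count_arith:
  fixes n c t q M s \<tau> SO SN :: real
  assumes n: "3 \<le> n" and c: "c * (3 * n - 4) = 2 * (n - 2) * (n - 1)" "2 * (n - 2) < 3 * c" "c \<le> n - 2"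
    and M: "0 < M" "M \<le> SN" and q: "1 \<le> q"
    and s: "(n - 2 - c) * M \<le> s" "s + SN \<le> (n - q) * M"
    and \<tau>: "(n - 2) * \<tau> = c * M - s"
    and SO: "SO \<le> (n - t) * \<tau>" and SN: "M + (q - 1) * \<tau> \<le> SN"
  shows "c * t * M \<le> (n - 2) * (s - SO + 2 * SN) + s * (t - 2 * q)"
    and "c * t * M = (n - 2) * (s - SO + 2 * SN) + s * (t - 2 * q)
      \<Longrightarrow> SO = (n - t) * \<tau> \<and> q = 1 \<and> s = (n - 2 - c) * M"
proof -
  define z where "z = n - 2 - c"
  have z0: "0 \<le> z * M" using c(3) M by (simp add: z_def)
  have "q \<le> n - 1"
  proof -
    have "0 \<le> (n - q - 1) * M" using s SN M z0 unfolding z_def by (simp add: algebra_simps)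
    then show ?thesis using M by (simp add: zero_le_mult_iff)
  qed
  have "2 * q \<le> n"
  proof -
    have "(n - 2) * s \<le> (n - 2) * ((n - q - 1) * M - (q - 1) * \<tau>)"
      using s SN n by (intro mult_left_mono) (auto simp: algebra_simps)
    moreover have "(q - 1) * ((n - 2) * \<tau>) = (q - 1) * (c * M - s)" using \<tau> by simp
    ultimately have "(n - q - 1) * s \<le> (n - 2) * (n - q - 1) * M - (q - 1) * c * M"
      by (simp add: algebra_simps)
    moreover have "(n - q - 1) * (z * M) \<le> (n - q - 1) * s"
      using \<open>q \<le> n - 1\<close> s(1) unfolding z_def by (intro mult_left_mono) auto
    ultimately have "(q - 1) * (c * M) \<le> (n - q - 1) * (c * M)"
      unfolding z_def by (simp add: algebra_simps)
    moreover have "0 < c * M" using c n M by simp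
    ultimately have "q - 1 \<le> n - q - 1" by (rule mult_right_le_imp_le)
    then show ?thesis by simp
  qed
  \<comment> \<open>Each summand is nonnegative; the remainder vanishes by the choice of \<tau> and of c.\<close>
  have identity: "(n - 2) * (s - SO + 2 * SN) + s * (t - 2 * q) - c * t * M
    = (n - 2) * ((n - t) * \<tau> - SO) + 2 * (n - 2) * (SN - M - (q - 1) * \<tau>)
      + (q - 1) * (6 * c - 4 * (n - 2)) * M + (2 * n - 4 * q) * (s - z * M)"
  proof -
    have "(n - 2) * \<tau> - c * M + s = 0" "2 * (n - 2) - n * c + 2 * (n - 2) * z = 0"
      using \<tau> c(1) by (simp_all add: z_def algebra_simps)
    moreover have "(n - 2) * (s - SO + 2 * SN) + s * (t - 2 * q) - c * t * M
      - ((n - 2) * ((n - t) * \<tau> - SO) + 2 * (n - 2) * (SN - M - (q - 1) * \<tau>)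
        + (q - 1) * (6 * c - 4 * (n - 2)) * M + (2 * n - 4 * q) * (s - z * M))
      = (2 * (q - 1) - (n - t)) * ((n - 2) * \<tau> - c * M + s)
        + M * (2 * (n - 2) - n * c + 2 * (n - 2) * z)"
      by (simp add: z_def algebra_simps)
    ultimately show ?thesis by simp
  qed
  have terms: "0 \<le> (n - 2) * ((n - t) * \<tau> - SO)" "0 \<le> 2 * (n - 2) * (SN - M - (q - 1) * \<tau>)"
    "0 \<le> (q - 1) * (6 * c - 4 * (n - 2)) * M" "0 \<le> (2 * n - 4 * q) * (s - z * M)"
    using n c M q s SO SN \<open>2 * q \<le> n\<close> by (simp_all add: z_def)
  show "c * t * M \<le> (n - 2) * (s - SO + 2 * SN) + s * (t - 2 * q)"
    using identity terms by linarith
  assume "c * t * M = (n - 2) * (s - SO + 2 * SN) + s * (t - 2 * q)"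
  then have "(n - 2) * ((n - t) * \<tau> - SO) = 0" "(q - 1) * (6 * c - 4 * (n - 2)) * M = 0"
    "(2 * n - 4 * q) * (s - z * M) = 0"
    using identity terms by linarith+
  then show "SO = (n - t) * \<tau> \<and> q = 1 \<and> s = (n - 2 - c) * M"
    using n c M by (auto simp: z_def)
qed

lemma signed_sum_split:
  fixes f :: "'a \<Rightarrow> real"
  assumes "finite T"
  shows "(\<Sum>i\<in>T. (if f i < 0 then -1 else 1) * (a * f i + s))
    = a * (\<Sum>i\<in>T. \<bar>f i\<bar>) + s * (real (card T) - 2 * real (card {i\<in>T. f i < 0}))"
proof -
  have "(\<Sum>i\<in>T. (if f i < 0 then -1 else 1) * (a * f i + s))
      = (\<Sum>i\<in>T. a * \<bar>f i\<bar> + s) - (\<Sum>i\<in>T. if f i < 0 then 2 * s else 0)"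
    by (simp add: sum_subtractf[symmetric]) (rule sum.cong, auto simp: abs_if algebra_simps)
  also have "(\<Sum>i\<in>T. if f i < 0 then 2 * s else 0) = 2 * s * real (card {i\<in>T. f i < 0})"
    using assms by (simp add: sum.If_cases Int_def conj_commute)
  finally show ?thesis by (simp add: sum.distrib sum_distrib_left algebra_simps)
qed

lemma abs_sum_split_negative:
  fixes f :: "'a \<Rightarrow> real"
  assumes "finite T"
  shows "(\<Sum>i\<in>T. \<bar>f i\<bar>) = (\<Sum>i\<in>T. f i) + 2 * (\<Sum>i\<in>{i\<in>T. f i < 0}. \<bar>f i\<bar>)"
proof -
  have "(\<Sum>i\<in>T. \<bar>f i\<bar>) = (\<Sum>i\<in>T. f i + (if f i < 0 then 2 * \<bar>f i\<bar> else 0))"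
    by (rule sum.cong) auto
  also have "\<dots> = (\<Sum>i\<in>T. f i) + 2 * (\<Sum>i\<in>{i\<in>T. f i < 0}. \<bar>f i\<bar>)"
    using assms by (simp add: sum.distrib sum.If_cases Int_def conj_commute sum_distrib_left)
  finally show ?thesis .
qed

lemma sum_outside_le_threshold:
  fixes x :: "real^'n"
  assumes "\<And>i. i \<notin> T \<Longrightarrow> x$i < \<tau>"
  shows "(\<Sum>i\<in>UNIV-T. x$i) \<le> (real CARD('n) - real (card T)) * \<tau>"
    and "T \<noteq> UNIV \<Longrightarrow> (\<Sum>i\<in>UNIV-T. x$i) < (real CARD('n) - real (card T)) * \<tau>"
proof -
  have card: "(\<Sum>i\<in>UNIV-T. \<tau>) = (real CARD('n) - real (card T)) * \<tau>"
    by (simp add: card_Diff_subset of_nat_diff card_mono)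
  show "(\<Sum>i\<in>UNIV-T. x$i) \<le> (real CARD('n) - real (card T)) * \<tau>"
    unfolding card[symmetric] using assms by (intro sum_mono) (simp add: less_imp_le)
  show "T \<noteq> UNIV \<Longrightarrow> (\<Sum>i\<in>UNIV-T. x$i) < (real CARD('n) - real (card T)) * \<tau>"
    unfolding card[symmetric] using assms by (intro sum_strict_mono) auto
qed

lemma sum_abs_ge_threshold:
  fixes f :: "'a \<Rightarrow> real"
  assumes "finite N" "k \<in> N" "\<And>i. i \<in> N \<Longrightarrow> \<tau> \<le> \<bar>f i\<bar>"
  shows "\<bar>f k\<bar> + (real (card N) - 1) * \<tau> \<le> (\<Sum>i\<in>N. \<bar>f i\<bar>)"
proof -
  have "1 \<le> card N" using assms(1,2) by (auto simp: Suc_le_eq card_gt_0_iff)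
  then have "(real (card N) - 1) * \<tau> = (\<Sum>i\<in>N-{k}. \<tau>)"
    using assms(1,2) by (simp add: of_nat_diff)
  also have "\<dots> \<le> (\<Sum>i\<in>N-{k}. \<bar>f i\<bar>)" using assms(3) by (intro sum_mono) auto
  finally show ?thesis using assms(1,2) by (simp add: sum.remove)
qed

lemma sum_plus_abs_negative_le:
  fixes x :: "real^'n"
  assumes "\<And>i. i \<in> N \<Longrightarrow> x$i < 0"
  shows "(\<Sum>j\<in>UNIV. x$j) + (\<Sum>i\<in>N. \<bar>x$i\<bar>) \<le> (real CARD('n) - real (card N)) * infnorm x"
proof -
  have "(\<Sum>i\<in>N. \<bar>x$i\<bar>) = (\<Sum>i\<in>N. - x$i)" by (intro sum.cong) (simp_all add: assms abs_of_neg)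
  then have "(\<Sum>j\<in>UNIV. x$j) + (\<Sum>i\<in>N. \<bar>x$i\<bar>) = (\<Sum>i\<in>UNIV-N. x$i)"
    by (simp add: sum.subset_diff[of N UNIV] sum_negf)
  also have "\<dots> \<le> (\<Sum>i\<in>UNIV-N. infnorm x)"
    using component_le_infnorm_cart[of x] by (intro sum_mono) (simp add: abs_le_iff)
  finally show ?thesis by (simp add: card_Diff_subset of_nat_diff card_mono)
qed

lemma threshold_signed_sum_bound:
  fixes x :: "real^'n"
  assumes n3: "3 \<le> CARD('n)" and x0: "x \<noteq> 0" and xk: "x$k = - infnorm x"
    and s: "(real CARD('n) - 2 - S_gain CARD('n)) * infnorm x \<le> (\<Sum>j\<in>UNIV. x$j)"
    and \<tau>: "(real CARD('n) - 2) * \<tau> = S_gain CARD('n) * infnorm x - (\<Sum>j\<in>UNIV. x$j)"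
  defines "T \<equiv> {i. \<tau> \<le> \<bar>x$i\<bar>}"
  shows "k \<in> T"
    and "S_gain CARD('n) * real (card T) * infnorm x
      \<le> (\<Sum>i\<in>T. (if x$i < 0 then -1 else 1) * ((real CARD('n) - 2) * x$i + (\<Sum>j\<in>UNIV. x$j)))"
    and "S_gain CARD('n) * real (card T) * infnorm x
      = (\<Sum>i\<in>T. (if x$i < 0 then -1 else 1) * ((real CARD('n) - 2) * x$i + (\<Sum>j\<in>UNIV. x$j)))
      \<Longrightarrow> T = UNIV \<and> (\<Sum>j\<in>UNIV. x$j) = (real CARD('n) - 2 - S_gain CARD('n)) * infnorm x
        \<and> (\<forall>i. i \<noteq> k \<longrightarrow> 0 < x$i)"
proof -
  define n c M s where "n = real CARD('n)" and "c = S_gain CARD('n)"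
    and "M = infnorm x" and "s = (\<Sum>j\<in>UNIV. x$j)"
  define N where "N = {i\<in>T. x$i < 0}"
  define SO SN where "SO = (\<Sum>i\<in>UNIV-T. x$i)" and "SN = (\<Sum>i\<in>N. \<bar>x$i\<bar>)"
  note c = S_gain_bounds[OF n3, folded n_def c_def]
  have n: "3 \<le> n" using n3 by (simp add: n_def)
  have M: "0 < M" using x0 by (simp add: M_def infnorm_pos_lt)
  have s_ge: "(n - 2 - c) * M \<le> s" and \<tau>_eq: "(n - 2) * \<tau> = c * M - s"
    using assms(4,5) by (simp_all add: n_def c_def M_def s_def)
  have "c * M \<le> (n - 2) * M" using c(3) M by (intro mult_right_mono) auto
  then have "(n - 2) * \<tau> \<le> (n - 2) * M"
    using s_ge \<tau>_eq by (simp add: algebra_simps)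
  then have "k \<in> N"
    using n xk M by (simp add: N_def T_def M_def)
  then show "k \<in> T" by (simp add: N_def)
  have "card N \<ge> 1" using \<open>k \<in> N\<close> by (auto simp: Suc_le_eq card_gt_0_iff)
  then have q1: "1 \<le> real (card N)" by simp
  have "finite T" by simp
  have "x$i < \<tau>" if "i \<notin> T" for i using that by (auto simp: T_def)
  note SO = sum_outside_le_threshold[where T = T, OF this, folded SO_def n_def]
  have "\<tau> \<le> \<bar>x$i\<bar>" if "i \<in> N" for i using that by (auto simp: N_def T_def)
  from sum_abs_ge_threshold[where f = "\<lambda>i. x$i", OF _ \<open>k \<in> N\<close> this]
  have SN: "M + (real (card N) - 1) * \<tau> \<le> SN" using xk by (simp add: SN_def M_def)
  have "\<bar>x$k\<bar> \<le> SN" unfolding SN_def by (rule member_le_sum) (use \<open>k \<in> N\<close> in auto)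
  then have M_SN: "M \<le> SN" using xk by (simp add: M_def)
  have s_SN: "s + SN \<le> (n - real (card N)) * M"
    unfolding s_def SN_def n_def M_def by (rule sum_plus_abs_negative_le) (simp add: N_def)
  have F: "(\<Sum>i\<in>T. (if x$i < 0 then -1 else 1) * ((n - 2) * x$i + s))
      = (n - 2) * (s - SO + 2 * SN) + s * (real (card T) - 2 * real (card N))"
    unfolding signed_sum_split[OF \<open>finite T\<close>] abs_sum_split_negative[OF \<open>finite T\<close>]
    by (simp add: s_def SO_def SN_def N_def sum.subset_diff[of T UNIV])
  note count = threshold_count_arith[OF n c(1,2) less_imp_le[OF c(3)] M M_SN
      q1 s_ge s_SN \<tau>_eq SO(1) SN]
  show "c * card T * M \<le> (\<Sum>i\<in>T. (if x$i < 0 then -1 else 1) * ((n - 2) * x$i + s))"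
    using count(1) unfolding F by simp
  assume "c * card T * M = (\<Sum>i\<in>T. (if x$i < 0 then -1 else 1) * ((n - 2) * x$i + s))"
  then have "SO = (n - real (card T)) * \<tau>" "card N = 1" and s_eq: "s = (n - 2 - c) * M"
    using count(2) unfolding F by simp_all
  then have "T = UNIV" "N = {k}"
    using SO(2) \<open>k \<in> N\<close> by (auto simp: card_1_singleton_iff)
  have "(n - 2) * \<tau> = (2 * c - (n - 2)) * M"
    using \<tau>_eq s_eq by (simp add: algebra_simps)
  moreover have "0 < (2 * c - (n - 2)) * M" using c(2) M n by simp
  ultimately have "0 < (n - 2) * \<tau>" by simp
  then have "0 < \<tau>" using n by (simp add: zero_less_mult_iff)
  have "0 < x$i" if "i \<noteq> k" for i
  proof -
    have "i \<in> T" "i \<notin> N" using \<open>T = UNIV\<close> \<open>N = {k}\<close> that by auto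
    then have "\<tau> \<le> \<bar>x$i\<bar>" "\<not> x$i < 0" by (simp_all add: N_def T_def)
    then show ?thesis using \<open>0 < \<tau>\<close> by linarith
  qed
  then show "T = UNIV \<and> s = (n - 2 - c) * M \<and> (\<forall>i. i \<noteq> k \<longrightarrow> 0 < x$i)"
    using \<open>T = UNIV\<close> s_eq by blast
qed

lemma threshold_lower_bound:
  fixes D :: "real^'n^'n" and x :: "real^'n"
  assumes n3: "3 \<le> CARD('n)" and D: "sym_nonneg_dd D" and x0: "x \<noteq> 0"
    and xk: "x$k = - infnorm x"
    and s: "(real CARD('n) - 2 - S_gain CARD('n)) * infnorm x \<le> (\<Sum>j\<in>UNIV. x$j)"
  shows "S_gain CARD('n) * infnorm x \<le> infnorm (S_mat *v x + D *v x)"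
    and "infnorm (S_mat *v x + D *v x) \<le> S_gain CARD('n) * infnorm x \<Longrightarrow>
      (\<Sum>j\<in>UNIV. x$j) = (real CARD('n) - 2 - S_gain CARD('n)) * infnorm x
      \<and> (\<forall>i. i \<noteq> k \<longrightarrow> 0 < x$i) \<and> (\<Sum>i\<in>UNIV. (if i = k then -1 else 1) * (D *v x)$i) = 0"
proof -
  define n c M s V where "n = real CARD('n)" and "c = S_gain CARD('n)" and "M = infnorm x"
    and "s = (\<Sum>j\<in>UNIV. x$j)" and "V = S_mat *v x + D *v x"
  define \<tau> where "\<tau> = (c * M - s) / (n - 2)"
  define T where "T = {i. \<tau> \<le> \<bar>x$i\<bar>}"
  define \<sigma> where "\<sigma> i = (if x$i < 0 then -1 else 1 :: real)" for i
  define w where "w = (\<chi> i. if i \<in> T then \<sigma> i else 0)"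
  define F where "F = (\<Sum>i\<in>T. \<sigma> i * ((n - 2) * x$i + s))"
  have "(n - 2) * \<tau> = c * M - s" using n3 by (simp add: \<tau>_def n_def)
  note count = threshold_signed_sum_bound[OF n3 x0 xk s this[unfolded n_def c_def M_def s_def],
      folded T_def \<sigma>_def n_def c_def M_def s_def, folded F_def]
  have sum_w: "(\<Sum>i\<in>UNIV. w$i * f i) = (\<Sum>i\<in>T. \<sigma> i * f i)" for f
  proof -
    have "w$i * f i = (if i \<in> T then \<sigma> i * f i else 0)" for i by (simp add: w_def)
    then show ?thesis by (simp add: sum.If_cases)
  qed
  have wD: "0 \<le> (\<Sum>i\<in>UNIV. w$i * (D *v x)$i)"
  proof (rule weighted_sum_mult_vec_nonneg[OF D])
    show "0 \<le> w$i * x$i" for i by (simp add: w_def \<sigma>_def)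
    show "0 \<le> (w$i + w$j) * (x$i + x$j)" for i j
      by (auto simp: w_def \<sigma>_def T_def abs_if split: if_splits)
  qed
  have wV: "(\<Sum>i\<in>UNIV. w$i * V$i) = F + (\<Sum>i\<in>UNIV. w$i * (D *v x)$i)"
    unfolding V_def F_def sum_w[symmetric]
    by (simp add: S_mat_mult_vec n_def s_def distrib_left sum.distrib)
  have wV_le: "(\<Sum>i\<in>UNIV. w$i * V$i) \<le> card T * infnorm V"
  proof -
    have "\<sigma> i * V$i \<le> infnorm V" for i
      using component_le_infnorm_cart[of V i] by (auto simp: \<sigma>_def)
    then show ?thesis
      unfolding sum_w using sum_mono[of T "\<lambda>i. \<sigma> i * V$i" "\<lambda>_. infnorm V"] by simp
  qed
  have "1 \<le> card T" using count(1) by (auto simp: Suc_le_eq card_gt_0_iff)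
  have "c * card T * M \<le> card T * infnorm V"
    using wD wV wV_le count(2) by linarith
  then show "c * M \<le> infnorm V"
    using \<open>1 \<le> card T\<close> by (simp add: mult_le_cancel_left_pos)
  assume "infnorm V \<le> c * M"
  then have "card T * infnorm V \<le> c * card T * M"
    using mult_left_mono[of "infnorm V" "c * M" "card T"] by (simp add: algebra_simps)
  then have "c * card T * M = F" and wD0: "(\<Sum>i\<in>UNIV. w$i * (D *v x)$i) = 0"
    using wD wV wV_le count(2) by linarith+
  then have "T = UNIV" and s_eq: "s = (n - 2 - c) * M" and pos: "\<forall>i. i \<noteq> k \<longrightarrow> 0 < x$i"
    using count(3) by blast+
  have "x$k < 0" using xk x0 by (simp add: infnorm_pos_lt)
  then have "w$i = (if i = k then -1 else 1)" for i
    using \<open>T = UNIV\<close> pos by (auto simp: w_def \<sigma>_def)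
  then show "s = (n - 2 - c) * M \<and> (\<forall>i. i \<noteq> k \<longrightarrow> 0 < x$i)
      \<and> (\<Sum>i\<in>UNIV. (if i = k then -1 else 1) * (D *v x)$i) = 0"
    using s_eq pos wD0 by simp
qed

section \<open>The main estimate and the norm of the inverse\<close>

lemma S_mat_plus_sym_nonneg_dd_negative_extreme:
  fixes D :: "real^'n^'n" and x :: "real^'n"
  assumes n3: "3 \<le> CARD('n)" and D: "sym_nonneg_dd D" and x0: "x \<noteq> 0"
    and xk: "x$k = - infnorm x" and less: "\<And>j. x$j < infnorm x"
  shows "S_gain CARD('n) * infnorm x \<le> infnorm (S_mat *v x + D *v x)"
    and "infnorm (S_mat *v x + D *v x) \<le> S_gain CARD('n) * infnorm x \<Longrightarrow> D = 0"
proof -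
  define n c M s V where "n = real CARD('n)" and "c = S_gain CARD('n)" and "M = infnorm x"
    and "s = (\<Sum>j\<in>UNIV. x$j)" and "V = S_mat *v x + D *v x"
  have M: "0 < M" using x0 by (simp add: M_def infnorm_pos_lt)
  have Dk: "0 \<le> - (D *v x)$k"
    using sym_nonneg_dd_extreme_row[OF D, of x k] xk M by (simp add: M_def)
  have neg: "(n - 2) * M - s - (D *v x)$k \<le> infnorm V"
    using component_le_infnorm_cart[of V k] xk
    by (simp add: V_def S_mat_mult_vec n_def s_def M_def algebra_simps)
  have "c * M \<le> infnorm V \<and> (infnorm V \<le> c * M \<longrightarrow> D = 0)"
  proof (cases "s < (n - 2 - c) * M")
    case True
    then have "c * M < infnorm V" using neg Dk by (simp add: algebra_simps)
    then show ?thesis by simp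
  next
    case False
    note threshold = threshold_lower_bound[OF n3 D x0 xk,
        folded n_def c_def M_def s_def V_def]
    have "D = 0" if "infnorm V \<le> c * M"
    proof -
      have s_eq: "s = (n - 2 - c) * M" and others: "\<forall>i. i \<noteq> k \<longrightarrow> 0 < x$i"
        and sum: "(\<Sum>i\<in>UNIV. (if i = k then -1 else 1) * (D *v x)$i) = 0"
        using threshold(2) False that by auto
      have "(D *v x)$k = 0"
        using neg that s_eq Dk by (simp add: algebra_simps)
      then show "D = 0"
        using sym_nonneg_dd_eq_0[OF D x0 xk _ _ sum] others less by simp
    qed
    then show ?thesis using threshold(1) False by simp
  qed
  then show "c * M \<le> infnorm V" "infnorm V \<le> c * M \<Longrightarrow> D = 0" by simp_all
qed

lemma S_mat_plus_sym_nonneg_dd_lower_bound: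
  fixes D :: "real^'n^'n" and x :: "real^'n"
  assumes n3: "3 \<le> CARD('n)" and D: "sym_nonneg_dd D" and x0: "x \<noteq> 0"
    and s: "0 \<le> (\<Sum>j\<in>UNIV. x$j)"
  shows "S_gain CARD('n) * infnorm x \<le> infnorm (S_mat *v x + D *v x)"
    and "infnorm (S_mat *v x + D *v x) \<le> S_gain CARD('n) * infnorm x \<Longrightarrow> D = 0"
proof -
  define c M V where "c = S_gain CARD('n)" and "M = infnorm x" and "V = S_mat *v x + D *v x"
  have M: "0 < M" using x0 by (simp add: M_def infnorm_pos_lt)
  have "c * M \<le> infnorm V \<and> (infnorm V \<le> c * M \<longrightarrow> D = 0)"
  proof (cases "\<exists>k. x$k = M")
    case True
    then obtain k where xk: "x$k = M" by blast
    have "0 \<le> (D *v x)$k"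
      using sym_nonneg_dd_extreme_row[OF D, of x k] xk M by (simp add: M_def)
    then have "(real CARD('n) - 2) * M \<le> infnorm V"
      using component_le_infnorm_cart[of V k] xk s by (simp add: V_def S_mat_mult_vec)
    moreover have "c * M < (real CARD('n) - 2) * M"
      using S_gain_bounds(3)[OF n3] M by (simp add: c_def)
    ultimately show ?thesis by simp
  next
    case False
    obtain k where "\<bar>x$k\<bar> = M" using infnorm_cart_attained[of x] by (auto simp: M_def)
    with False have "x$k = - infnorm x" by (auto simp: M_def abs_if split: if_splits)
    moreover have "x$j < infnorm x" for j
      using False component_le_infnorm_cart[of x j] by (fastforce simp: M_def abs_le_iff)
    ultimately show ?thesis
      using S_mat_plus_sym_nonneg_dd_negative_extreme[OF n3 D x0] by (simp add: c_def M_def V_def)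
  qed
  then show "c * M \<le> infnorm V" "infnorm V \<le> c * M \<Longrightarrow> D = 0" by simp_all
qed

lemma diag_dominant_scaleR: "0 \<le> a \<Longrightarrow> diag_dominant J \<Longrightarrow> diag_dominant (a *\<^sub>R J)"
  unfolding diag_dominant_def row_excess_def
  by (simp add: abs_mult sum_distrib_left[symmetric] right_diff_distrib[symmetric])

lemma dd_infnorm_lower_bound:
  fixes J :: "real^'n^'n"
  assumes n3: "3 \<le> CARD('n)" and l: "0 < l" and sym: "transpose J = J"
    and dd: "diag_dominant J" and ge: "\<And>i j. l \<le> J$i$j"
  shows "l * S_gain CARD('n) * infnorm x \<le> infnorm (J *v x)"
    and "J \<noteq> l *\<^sub>R S_mat \<Longrightarrow> x \<noteq> 0 \<Longrightarrow> l * S_gain CARD('n) * infnorm x < infnorm (J *v x)"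
proof -
  define D where "D = (1 / l) *\<^sub>R J - S_mat"
  have D: "sym_nonneg_dd D"
    unfolding D_def using sym dd ge l
    by (intro sym_nonneg_dd_minus_S_mat) (simp_all add: transpose_scalar diag_dominant_scaleR)
  define y where "y = (if 0 \<le> (\<Sum>j\<in>UNIV. x$j) then x else - x)"
  have "J *v (- x) = - (J *v x)" by (simp add: vec_eq_iff matrix_vector_mult_def sum_negf)
  then have y: "0 \<le> (\<Sum>j\<in>UNIV. y$j)" "infnorm y = infnorm x" "infnorm (J *v y) = infnorm (J *v x)"
    by (auto simp: y_def sum_negf infnorm_neg)
  have JSD: "J = l *\<^sub>R (S_mat + D)" using l by (simp add: D_def)
  then have Jy: "infnorm (J *v y) = l * infnorm (S_mat *v y + D *v y)"
    using l by (simp add: infnorm_mul scaleR_matrix_vector_assoc[symmetric] matrix_vector_mult_add_rdistrib)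
  show "l * S_gain CARD('n) * infnorm x \<le> infnorm (J *v x)"
  proof (cases "x = 0")
    case False
    then have "y \<noteq> 0" by (simp add: y_def)
    from S_mat_plus_sym_nonneg_dd_lower_bound(1)[OF n3 D this y(1)]
    have "l * (S_gain CARD('n) * infnorm y) \<le> l * infnorm (S_mat *v y + D *v y)"
      using l by (simp add: mult_left_mono)
    then show ?thesis using y Jy by (simp add: mult.assoc)
  qed (simp add: infnorm_0)
  assume "J \<noteq> l *\<^sub>R S_mat" "x \<noteq> 0"
  then have "D \<noteq> 0" "y \<noteq> 0" using JSD by (auto simp: y_def)
  then have "S_gain CARD('n) * infnorm y < infnorm (S_mat *v y + D *v y)"
    using S_mat_plus_sym_nonneg_dd_lower_bound(2)[OF n3 D _ y(1)] by force
  then have "l * (S_gain CARD('n) * infnorm y) < l * infnorm (S_mat *v y + D *v y)"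
    using l by simp
  then show "l * S_gain CARD('n) * infnorm x < infnorm (J *v x)"
    using y Jy by (simp add: mult.assoc)
qed

lemma invertible_if_infnorm_lower_bound:
  fixes J :: "real^'n^'n"
  assumes "0 < c" "\<And>x. c * infnorm x \<le> infnorm (J *v x)"
  shows "invertible J"
proof -
  have "x = 0" if "J *v x = 0" for x
    using assms(2)[of x] assms(1) that infnorm_pos_le[of x]
    by (simp add: infnorm_0 infnorm_eq_0 mult_le_0_iff)
  then show ?thesis by (simp add: invertible_left_inverse matrix_left_invertible_ker)
qed

lemma inf_norm_right_inverse_le:
  fixes J A :: "real^'n^'n"
  assumes "J ** A = mat 1" "0 < c" "\<And>x. c * infnorm x \<le> infnorm (J *v x)"
  shows "inf_norm A \<le> 1 / c"
proof -
  obtain b where "infnorm b \<le> 1" "infnorm (A *v b) = inf_norm A"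
    using inf_norm_attained_infnorm by blast
  moreover have "J *v (A *v b) = b" by (simp add: matrix_vector_mul_assoc assms(1))
  ultimately have "c * inf_norm A \<le> 1" using assms(3)[of "A *v b"] by simp
  then show ?thesis using assms(2) by (simp add: field_simps)
qed

lemma inf_norm_right_inverse_less:
  fixes J A :: "real^'n^'n"
  assumes "J ** A = mat 1" "0 < c" "\<And>x. x \<noteq> 0 \<Longrightarrow> c * infnorm x < infnorm (J *v x)"
  shows "inf_norm A < 1 / c"
proof -
  obtain b where b: "infnorm b \<le> 1" "infnorm (A *v b) = inf_norm A"
    using inf_norm_attained_infnorm by blast
  show ?thesis
  proof (cases "A *v b = 0")
    case True
    then show ?thesis using b assms(2) by (simp add: infnorm_0)
  next
    case False
    moreover have "J *v (A *v b) = b" by (simp add: matrix_vector_mul_assoc assms(1))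
    ultimately have "c * inf_norm A < 1" using assms(3)[of "A *v b"] b by simp
    then show ?thesis using assms(2) by (simp add: field_simps)
  qed
qed

theorem theorem1:
  fixes J :: "real^'n^'n" and l :: real
  assumes "CARD('n) \<ge> 3" and "l > 0"
    and "transpose J = J"
    and "diag_dominant J"
    and "\<forall>i j. J $ i $ j \<ge> l"
  shows "invertible J
    \<and> inf_norm (matrix_inv J) \<le> (1 / l) * inf_norm (matrix_inv (S_mat :: real^'n^'n))
    \<and> (1 / l) * inf_norm (matrix_inv (S_mat :: real^'n^'n))
        = (3 * real CARD('n) - 4) / (2 * l * (real CARD('n) - 2) * (real CARD('n) - 1))
    \<and> (inf_norm (matrix_inv J) = (1 / l) * inf_norm (matrix_inv (S_mat :: real^'n^'n))
        \<longleftrightarrow> J = l *\<^sub>R S_mat)"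
proof -
  note bound = dd_infnorm_lower_bound[OF assms(1-4) spec[OF spec[OF assms(5)]]]
  define c where "c = l * S_gain CARD('n)"
  have c: "0 < c" using assms(1,2) S_gain_bounds(2)[OF assms(1)] by (simp add: c_def)
  have norm_S: "(1 / l) * inf_norm (matrix_inv (S_mat :: real^'n^'n))
      = (3 * real CARD('n) - 4) / (2 * l * (real CARD('n) - 2) * (real CARD('n) - 1))"
    using assms(1) by (simp add: inf_norm_matrix_inv_S_mat)
  also have "\<dots> = 1 / c"
    using assms(1,2) by (simp add: c_def S_gain_def)
  finally have norm_S_c: "(1 / l) * inf_norm (matrix_inv (S_mat :: real^'n^'n)) = 1 / c" .
  have "invertible J"
    by (rule invertible_if_infnorm_lower_bound[OF c]) (use bound(1) in \<open>simp add: c_def\<close>)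
  then obtain A where JA: "J ** A = mat 1" by (auto simp: invertible_def)
  then have A: "matrix_inv J = A" by (rule matrix_inv_eqI)
  have "inf_norm A = 1 / c \<longleftrightarrow> J = l *\<^sub>R S_mat"
  proof
    assume "J = l *\<^sub>R S_mat"
    then have "J ** ((1 / l) *\<^sub>R matrix_inv S_mat) = mat 1"
      using assms(1,2) by (simp add: matrix_scalar_ac scalar_matrix_assoc[symmetric] S_mat_mult_matrix_inv)
    then have "A = (1 / l) *\<^sub>R matrix_inv S_mat" using A by (simp add: matrix_inv_eqI)
    then show "inf_norm A = 1 / c" using norm_S_c assms(2) by (simp add: inf_norm_scaleR)
  qed (use inf_norm_right_inverse_less[OF JA c] bound(2) c_def in force)
  then show ?thesis
    using \<open>invertible J\<close> A norm_S norm_S_c inf_norm_right_inverse_le[OF JA c] bound(1)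
    by (simp add: c_def)
qed

end
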